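(* Let $G=(V=[n],w)$ be a connected loopless weighted graph with $n\ge2$, and let $\gamma=\frac{\max_{1\le i\le n}\mathrm{vol}(i)}{\min_{1\le i\le n}\mathrm{vol}(i)}$. Then for every $0<\varepsilon<1$, $$\frac{\tilde h_G}{h_G}\ \ge\ \Big(1-\frac{2\gamma}{\varepsilon^2 n}\Big)(1-\varepsilon).$$ (Equivalently, since $\tilde h_G=h_{W}$ for the graphon $W$ associated to $G$ by $W(x,y)=w(i,j)$ for $x\in P_i,y\in P_j$, where $P_i$ is the $i$-th interval of the partition of $[0,1]$ into $n$ consecutive intervals of length $1/n$, the same bound holds for $h_W/h_G$.)
   Context: A weighted graph is a pair $(V,w)$ with $V=[n]$ and $w:V\times V\to[0,1]$ symmetric; it is loopless if $w(v,v)=0$ for all $v$. Put $\mathrm{vol}(v)=\sum_{u}w(u,v)$ and $\mathrm{vol}(S)=\sum_{v\in S}\mathrm{vol}(v)$. $G$ is connected if $\sum_{u\in S,v\notin S}w(u,v)>0$ for every $\emptyset\ne S\subsetneq V$. The Cheeger constant is $h_G=\min_{\emptyset\ne S\subsetneq V}\frac{\sum_{u\in S,v\notin S}w(u,v)}{\min\{\mathrm{vol}(S),\mathrm{vol}(V\setminus S)\}}$. A fractional partition of $V$ is a pair $(\rho,\eta)$ of functions $V\to[0,1]$ with $\rho+\eta\equiv1$; $\|\rho\|=\sum_u\rho(u)\mathrm{vol}(u)$, $\|\eta\|=\sum_u\eta(u)\mathrm{vol}(u)$. When both are nonzero, $\tilde h(G;\rho,\eta)=\frac{\sum_{u,v}\rho(u)\eta(v)w(u,v)}{\min\{\|\rho\|,\|\eta\|\}}$;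 the fractional Cheeger constant is $\tilde h_G=\inf\tilde h(G;\rho,\eta)$ over such fractional partitions. For a graphon $W:[0,1]^2\to[0,1]$ (measurable, symmetric), $h_W=\inf_{A:\,0<\mu_L(A)<1}\frac{\int_{A\times A^c}W}{\min\{\int_{A\times I}W,\int_{A^c\times I}W\}}$. *)

theory Defs
  imports "HOL-Analysis.Analysis"
begin

text \<open>Weighted graph on vertex set V = {0..<n} (i.e. [n] reindexed from 0),
  weight function w :: nat => nat => real.\<close>

definition weighted_graph :: "nat \<Rightarrow> (nat \<Rightarrow> nat \<Rightarrow> real) \<Rightarrow> bool" where
  "weighted_graph n w \<longleftrightarrow>
     (\<forall>u\<in>{0..<n}. \<forall>v\<in>{0..<n}. 0 \<le> w u v \<and> w u v \<le> 1 \<and> w u v = w v u)"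

definition loopless :: "nat \<Rightarrow> (nat \<Rightarrow> nat \<Rightarrow> real) \<Rightarrow> bool" where
  "loopless n w \<longleftrightarrow> (\<forall>v\<in>{0..<n}. w v v = 0)"

definition vol :: "nat \<Rightarrow> (nat \<Rightarrow> nat \<Rightarrow> real) \<Rightarrow> nat \<Rightarrow> real" where
  "vol n w v = (\<Sum>u\<in>{0..<n}. w u v)"

definition vol_set :: "nat \<Rightarrow> (nat \<Rightarrow> nat \<Rightarrow> real) \<Rightarrow> nat set \<Rightarrow> real" where
  "vol_set n w S = (\<Sum>v\<in>S. vol n w v)"

definition cut :: "nat \<Rightarrow> (nat \<Rightarrow> nat \<Rightarrow> real) \<Rightarrow> nat set \<Rightarrow> real" where
  "cut n w S = (\<Sum>u\<in>S. \<Sum>v\<in>{0..<n} - S. w u v)"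

definition connected_wg :: "nat \<Rightarrow> (nat \<Rightarrow> nat \<Rightarrow> real) \<Rightarrow> bool" where
  "connected_wg n w \<longleftrightarrow> (\<forall>S. S \<noteq> {} \<and> S \<subset> {0..<n} \<longrightarrow> cut n w S > 0)"

definition cheeger :: "nat \<Rightarrow> (nat \<Rightarrow> nat \<Rightarrow> real) \<Rightarrow> real" where
  "cheeger n w = (INF S \<in> {S. S \<noteq> {} \<and> S \<subset> {0..<n}}.
       cut n w S / min (vol_set n w S) (vol_set n w ({0..<n} - S)))"

definition frac_norm :: "nat \<Rightarrow> (nat \<Rightarrow> nat \<Rightarrow> real) \<Rightarrow> (nat \<Rightarrow> real) \<Rightarrow> real" where
  "frac_norm n w \<rho> = (\<Sum>u\<in>{0..<n}. \<rho> u * vol n w u)"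

definition fractional_partition :: "nat \<Rightarrow> (nat \<Rightarrow> real) \<Rightarrow> (nat \<Rightarrow> real) \<Rightarrow> bool" where
  "fractional_partition n \<rho> \<eta> \<longleftrightarrow>
     (\<forall>u\<in>{0..<n}. 0 \<le> \<rho> u \<and> \<rho> u \<le> 1 \<and> 0 \<le> \<eta> u \<and> \<eta> u \<le> 1 \<and> \<rho> u + \<eta> u = 1)"

definition frac_cheeger_ratio ::
  "nat \<Rightarrow> (nat \<Rightarrow> nat \<Rightarrow> real) \<Rightarrow> (nat \<Rightarrow> real) \<Rightarrow> (nat \<Rightarrow> real) \<Rightarrow> real" where
  "frac_cheeger_ratio n w \<rho> \<eta> =
     (\<Sum>u\<in>{0..<n}. \<Sum>v\<in>{0..<n}. \<rho> u * \<eta> v * w u v)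
       / min (frac_norm n w \<rho>) (frac_norm n w \<eta>)"

text \<open>Functions are only relevant on {0..<n}; the infimum ranges over all
  fractional partitions with both norms nonzero.\<close>
definition frac_cheeger :: "nat \<Rightarrow> (nat \<Rightarrow> nat \<Rightarrow> real) \<Rightarrow> real" where
  "frac_cheeger n w = (INF p \<in> {(\<rho>, \<eta>). fractional_partition n \<rho> \<eta> \<and>
        frac_norm n w \<rho> \<noteq> 0 \<and> frac_norm n w \<eta> \<noteq> 0}.
      frac_cheeger_ratio n w (fst p) (snd p))"

end

theory Submission
  imports Defs
begin

(* Given a fractional partition (rho, eta), let S be the random vertex set that contains each
   vertex u independently with probability rho u.  The expected cut of S is exactly the numerator
   of the fractional Cheeger ratio, while X = vol S has mean |rho| and variance
   sum_u rho u * eta u * vol(u)^2 <= M |rho| |eta| / T, where M is the maximal volume and T = vol V.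
   Since cut S >= h_G * min (X, T - X), it remains to bound E[min (X, T - X)] from below by
   (1 - 2M/(eps^2 T)) (1 - eps) min (|rho|, |eta|): integrate a quadratic minorant of
   t |-> min (t, T - t) and use only the mean and the variance of X.  Finally M/T <= gamma/n. *)

section \<open>Random subsets with independent memberships\<close>

(* The probability of S for the random subset of A that contains each u independently with
   probability rho u; the lemmas below assume rho + eta = 1 on A. *)
definition bernoulli_weight :: "'a set \<Rightarrow> ('a \<Rightarrow> real) \<Rightarrow> ('a \<Rightarrow> real) \<Rightarrow> 'a set \<Rightarrow> real" where
  "bernoulli_weight A \<rho> \<eta> S = (\<Prod>u\<in>S. \<rho> u) * (\<Prod>u\<in>A - S. \<eta> u)"

lemma bernoulli_weight_nonneg:
  assumes "\<forall>u\<in>A. 0 \<le> \<rho> u \<and> 0 \<le> \<eta> u" and "S \<subseteq> A"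
  shows "0 \<le> bernoulli_weight A \<rho> \<eta> S"
  using assms unfolding bernoulli_weight_def by (auto intro!: mult_nonneg_nonneg prod_nonneg)

lemma sum_bernoulli_weight_constrained:
  assumes fin: "finite A" and "B \<subseteq> A" "C \<subseteq> A" "B \<inter> C = {}"
    and partition: "\<forall>u\<in>A. \<rho> u + \<eta> u = 1"
  shows "(\<Sum>S\<in>Pow A. bernoulli_weight A \<rho> \<eta> S * of_bool (B \<subseteq> S \<and> C \<inter> S = {}))
     = (\<Prod>u\<in>B. \<rho> u) * (\<Prod>u\<in>C. \<eta> u)"
proof -
  define \<rho>' where "\<rho>' u = (if u \<in> C then 0 else \<rho> u)" for u
  define \<eta>' where "\<eta>' u = (if u \<in> B then 0 else \<eta> u)" for u
  have "(\<Sum>S\<in>Pow A. bernoulli_weight A \<rho> \<eta> S * of_bool (B \<subseteq> S \<and> C \<inter> S = {}))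
      = (\<Sum>S\<in>Pow A. (\<Prod>u\<in>S. \<rho>' u) * (\<Prod>u\<in>A - S. \<eta>' u))"
  proof (rule sum.cong[OF refl])
    fix S assume "S \<in> Pow A"
    then have S: "finite S" "S \<subseteq> A" using fin finite_subset by auto
    consider "C \<inter> S \<noteq> {}" | "B - S \<noteq> {}" | "C \<inter> S = {}" "B \<subseteq> S" by blast
    then show "bernoulli_weight A \<rho> \<eta> S * of_bool (B \<subseteq> S \<and> C \<inter> S = {})
        = (\<Prod>u\<in>S. \<rho>' u) * (\<Prod>u\<in>A - S. \<eta>' u)"
    proof cases
      case 1
      then have "(\<Prod>u\<in>S. \<rho>' u) = 0" using S by (intro prod_zero) (auto simp: \<rho>'_def)
      with 1 show ?thesis by simp
    next
      case 2
      then have "(\<Prod>u\<in>A - S. \<eta>' u) = 0" using fin \<open>B \<subseteq> A\<close> by (intro prod_zero) (auto simp: \<eta>'_def)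
      with 2 show ?thesis by auto
    next
      case 3
      then show ?thesis unfolding bernoulli_weight_def
        by (auto simp: \<rho>'_def \<eta>'_def intro!: arg_cong2[where f = "(*)"] prod.cong)
    qed
  qed
  also have "\<dots> = (\<Prod>u\<in>A. \<rho>' u + \<eta>' u)" by (rule prod_add[OF fin, symmetric])
  also have "\<dots> = (\<Prod>u\<in>B \<union> C. \<rho>' u + \<eta>' u)"
    using fin assms(2-5) by (intro prod.mono_neutral_right) (auto simp: \<rho>'_def \<eta>'_def)
  also have "\<dots> = (\<Prod>u\<in>B. \<rho> u) * (\<Prod>u\<in>C. \<eta> u)"
    using fin assms(2-4) by (subst prod.union_disjoint)
      (auto simp: \<rho>'_def \<eta>'_def intro: finite_subset intro!: arg_cong2[where f = "(*)"] prod.cong)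
  finally show ?thesis .
qed

lemma sum_bernoulli_weight:
  assumes "finite A" "\<forall>u\<in>A. \<rho> u + \<eta> u = 1"
  shows "(\<Sum>S\<in>Pow A. bernoulli_weight A \<rho> \<eta> S) = 1"
  using sum_bernoulli_weight_constrained[OF assms(1) _ _ _ assms(2), of "{}" "{}"] by simp

lemma sum_bernoulli_weight_mem:
  assumes "finite A" "\<forall>u\<in>A. \<rho> u + \<eta> u = 1" "u \<in> A"
  shows "(\<Sum>S\<in>Pow A. bernoulli_weight A \<rho> \<eta> S * of_bool (u \<in> S)) = \<rho> u"
  using sum_bernoulli_weight_constrained[OF assms(1) _ _ _ assms(2), of "{u}" "{}"] assms(3) by simp

lemma sum_bernoulli_weight_mem_mem:
  assumes "finite A" "\<forall>u\<in>A. \<rho> u + \<eta> u = 1" "u \<in> A" "v \<in> A" "u \<noteq> v"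
  shows "(\<Sum>S\<in>Pow A. bernoulli_weight A \<rho> \<eta> S * of_bool (u \<in> S \<and> v \<in> S)) = \<rho> u * \<rho> v"
  using sum_bernoulli_weight_constrained[OF assms(1) _ _ _ assms(2), of "{u, v}" "{}"] assms(3-5)
  by simp

lemma sum_bernoulli_weight_mem_not_mem:
  assumes "finite A" "\<forall>u\<in>A. \<rho> u + \<eta> u = 1" "u \<in> A" "v \<in> A" "u \<noteq> v"
  shows "(\<Sum>S\<in>Pow A. bernoulli_weight A \<rho> \<eta> S * of_bool (u \<in> S \<and> v \<notin> S)) = \<rho> u * \<eta> v"
  using sum_bernoulli_weight_constrained[OF assms(1) _ _ _ assms(2), of "{u}" "{v}"] assms(3-5)
  by simp

lemma sum_subset_eq_indicator:
  fixes f :: "'a \<Rightarrow> real"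
  assumes "finite A" "S \<subseteq> A"
  shows "sum f S = (\<Sum>u\<in>A. of_bool (u \<in> S) * f u)"
  using assms by (subst sum_of_bool_mult_eq[OF assms(1)]) (simp add: Int_absorb1)


lemma bernoulli_expectation:
  assumes finite: "finite A" and partition: "\<forall>u\<in>A. \<rho> u + \<eta> u = 1"
  shows "(\<Sum>S\<in>Pow A. bernoulli_weight A \<rho> \<eta> S * sum f S) = (\<Sum>u\<in>A. \<rho> u * f u)"
proof -
  have "(\<Sum>S\<in>Pow A. bernoulli_weight A \<rho> \<eta> S * sum f S)
      = (\<Sum>S\<in>Pow A. \<Sum>u\<in>A. f u * (bernoulli_weight A \<rho> \<eta> S * of_bool (u \<in> S)))"
  proof (rule sum.cong[OF refl])
    fix S assume "S \<in> Pow A"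
    then have "sum f S = (\<Sum>u\<in>A. of_bool (u \<in> S) * f u)"
      using finite by (intro sum_subset_eq_indicator) auto
    then show "bernoulli_weight A \<rho> \<eta> S * sum f S
        = (\<Sum>u\<in>A. f u * (bernoulli_weight A \<rho> \<eta> S * of_bool (u \<in> S)))"
      by (simp add: sum_distrib_left mult_ac)
  qed
  also have "\<dots> = (\<Sum>u\<in>A. f u * (\<Sum>S\<in>Pow A. bernoulli_weight A \<rho> \<eta> S * of_bool (u \<in> S)))"
    by (subst sum.swap) (simp add: sum_distrib_left)
  also have "\<dots> = (\<Sum>u\<in>A. \<rho> u * f u)"
    (* sum_mult_of_bool_eq would turn the indicator sums into sums over filtered sets *)
    using finite partition
    by (intro sum.cong refl) (simp add: sum_bernoulli_weight_mem del: sum_mult_of_bool_eq)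
  finally show ?thesis .
qed

lemma bernoulli_second_moment:
  assumes finite: "finite A" and partition: "\<forall>u\<in>A. \<rho> u + \<eta> u = 1"
  shows "(\<Sum>S\<in>Pow A. bernoulli_weight A \<rho> \<eta> S * (sum f S)\<^sup>2)
     = (\<Sum>u\<in>A. \<rho> u * f u)\<^sup>2 + (\<Sum>u\<in>A. \<rho> u * \<eta> u * (f u)\<^sup>2)"
proof -
  let ?P = "\<lambda>u v. \<Sum>S\<in>Pow A. bernoulli_weight A \<rho> \<eta> S * of_bool (u \<in> S \<and> v \<in> S)"
  have "(\<Sum>S\<in>Pow A. bernoulli_weight A \<rho> \<eta> S * (sum f S)\<^sup>2)
      = (\<Sum>S\<in>Pow A. \<Sum>u\<in>A. \<Sum>v\<in>A. f u * f v * (bernoulli_weight A \<rho> \<eta> S * of_bool (u \<in> S \<and> v \<in> S)))"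
  proof (rule sum.cong[OF refl])
    fix S assume "S \<in> Pow A"
    then have "sum f S = (\<Sum>u\<in>A. of_bool (u \<in> S) * f u)"
      using finite by (intro sum_subset_eq_indicator) auto
    then show "bernoulli_weight A \<rho> \<eta> S * (sum f S)\<^sup>2
        = (\<Sum>u\<in>A. \<Sum>v\<in>A. f u * f v * (bernoulli_weight A \<rho> \<eta> S * of_bool (u \<in> S \<and> v \<in> S)))"
      by (simp add: power2_eq_square sum_product sum_distrib_left of_bool_conj mult_ac)
  qed
  also have "\<dots> = (\<Sum>u\<in>A. \<Sum>v\<in>A. f u * f v * ?P u v)"
    by (subst sum.swap, rule sum.cong[OF refl], subst sum.swap) (simp add: sum_distrib_left)
  also have "\<dots> = (\<Sum>u\<in>A. \<Sum>v\<in>A. \<rho> u * f u * (\<rho> v * f v) + (if u = v then \<rho> u * \<eta> u * (f u)\<^sup>2 else 0))"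
  proof (intro sum.cong refl)
    fix u v assume uv: "u \<in> A" "v \<in> A"
    show "f u * f v * ?P u v = \<rho> u * f u * (\<rho> v * f v) + (if u = v then \<rho> u * \<eta> u * (f u)\<^sup>2 else 0)"
    proof (cases "u = v")
      case True
      have P: "?P u v = \<rho> u"
        using True sum_bernoulli_weight_mem[OF finite partition uv(1)] by simp
      have \<eta>: "\<eta> v = 1 - \<rho> v"
        using partition uv by (simp add: eq_diff_eq add.commute)
      show ?thesis
        using True P by (simp add: \<eta> power2_eq_square algebra_simps)
    qed (use uv finite partition in \<open>simp add: sum_bernoulli_weight_mem_mem del: sum_mult_of_bool_eq\<close>)
  qed
  also have "\<dots> = (\<Sum>u\<in>A. \<rho> u * f u)\<^sup>2 + (\<Sum>u\<in>A. \<rho> u * \<eta> u * (f u)\<^sup>2)"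
    using finite by (simp add: sum.distrib power2_eq_square sum_product)
  finally show ?thesis .
qed

lemma bernoulli_variance:
  assumes finite: "finite A" and partition: "\<forall>u\<in>A. \<rho> u + \<eta> u = 1"
  shows "(\<Sum>S\<in>Pow A. bernoulli_weight A \<rho> \<eta> S * (sum f S - (\<Sum>u\<in>A. \<rho> u * f u))\<^sup>2)
     = (\<Sum>u\<in>A. \<rho> u * \<eta> u * (f u)\<^sup>2)"
proof -
  let ?m = "\<Sum>u\<in>A. \<rho> u * f u"
  have "(\<Sum>S\<in>Pow A. bernoulli_weight A \<rho> \<eta> S * (sum f S - ?m)\<^sup>2)
      = (\<Sum>S\<in>Pow A. bernoulli_weight A \<rho> \<eta> S * (sum f S)\<^sup>2
          - 2 * ?m * (bernoulli_weight A \<rho> \<eta> S * sum f S) + ?m\<^sup>2 * bernoulli_weight A \<rho> \<eta> S)"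
    by (intro sum.cong refl) (simp add: power2_eq_square algebra_simps)
  also have "\<dots> = (\<Sum>S\<in>Pow A. bernoulli_weight A \<rho> \<eta> S * (sum f S)\<^sup>2)
        - 2 * ?m * (\<Sum>S\<in>Pow A. bernoulli_weight A \<rho> \<eta> S * sum f S)
        + ?m\<^sup>2 * (\<Sum>S\<in>Pow A. bernoulli_weight A \<rho> \<eta> S)"
    by (simp add: sum.distrib sum_subtractf sum_distrib_left)
  finally show ?thesis
    unfolding bernoulli_second_moment[OF finite partition] bernoulli_expectation[OF finite partition]
      sum_bernoulli_weight[OF finite partition]
    by (simp add: power2_eq_square)
qed

lemma bernoulli_expectation_cut:
  assumes finite: "finite A" and partition: "\<forall>u\<in>A. \<rho> u + \<eta> u = 1"
    and loopless: "\<forall>u\<in>A. g u u = 0"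
  shows "(\<Sum>S\<in>Pow A. bernoulli_weight A \<rho> \<eta> S * (\<Sum>u\<in>S. \<Sum>v\<in>A - S. g u v))
     = (\<Sum>u\<in>A. \<Sum>v\<in>A. \<rho> u * \<eta> v * g u v)"
proof -
  let ?P = "\<lambda>u v. \<Sum>S\<in>Pow A. bernoulli_weight A \<rho> \<eta> S * of_bool (u \<in> S \<and> v \<notin> S)"
  have "(\<Sum>S\<in>Pow A. bernoulli_weight A \<rho> \<eta> S * (\<Sum>u\<in>S. \<Sum>v\<in>A - S. g u v))
      = (\<Sum>S\<in>Pow A. \<Sum>u\<in>A. \<Sum>v\<in>A. g u v * (bernoulli_weight A \<rho> \<eta> S * of_bool (u \<in> S \<and> v \<notin> S)))"
  proof (rule sum.cong[OF refl])
    fix S assume "S \<in> Pow A"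
    then have "(\<Sum>u\<in>S. \<Sum>v\<in>A - S. g u v)
        = (\<Sum>u\<in>A. of_bool (u \<in> S) * (\<Sum>v\<in>A. of_bool (v \<in> A - S) * g u v))"
    proof -
      have "A \<inter> S = S" "A \<inter> {v. v \<notin> S} = A - S" using \<open>S \<in> Pow A\<close> by auto
      then show ?thesis using finite by simp
    qed
    then show "bernoulli_weight A \<rho> \<eta> S * (\<Sum>u\<in>S. \<Sum>v\<in>A - S. g u v)
        = (\<Sum>u\<in>A. \<Sum>v\<in>A. g u v * (bernoulli_weight A \<rho> \<eta> S * of_bool (u \<in> S \<and> v \<notin> S)))"
      by (simp add: sum_distrib_left of_bool_conj mult_ac)
  qed
  also have "\<dots> = (\<Sum>u\<in>A. \<Sum>v\<in>A. g u v * ?P u v)"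
    by (subst sum.swap, rule sum.cong[OF refl], subst sum.swap) (simp add: sum_distrib_left)
  also have "\<dots> = (\<Sum>u\<in>A. \<Sum>v\<in>A. \<rho> u * \<eta> v * g u v)"
  proof (intro sum.cong refl)
    fix u v assume "u \<in> A" "v \<in> A"
    then show "g u v * ?P u v = \<rho> u * \<eta> v * g u v"
      using loopless finite partition
      by (cases "u = v") (simp_all add: sum_bernoulli_weight_mem_not_mem del: sum_mult_of_bool_eq)
  qed
  finally show ?thesis .
qed

section \<open>The expectation of min X (T - X) from its mean and variance\<close>

(* The parabola touches t |-> t at t = a and t |-> T - t at t = b. *)
lemma min_compl_ge_parabola:
  fixes x a b T :: real
  assumes "a + b = T" "a < b"
  shows "x - (x - a)\<^sup>2 / (b - a) \<le> min x (T - x)"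
proof -
  have "(x - a)\<^sup>2 - (2 * x - T) * (b - a) = (x - b)\<^sup>2"
    using assms(1) by (auto simp: power2_eq_square algebra_simps)
  then have "(2 * x - T) * (b - a) \<le> (x - a)\<^sup>2"
    using zero_le_power2[of "x - b"] by linarith
  then have "2 * x - T \<le> (x - a)\<^sup>2 / (b - a)"
    using assms(2) by (simp add: le_divide_eq)
  moreover have "0 \<le> (x - a)\<^sup>2 / (b - a)" using assms(2) by simp
  ultimately show ?thesis by (simp add: min_def)
qed

lemma min_compl_ge_local_parabola:
  fixes x a b T e :: real
  assumes "a + b = T" "a \<le> b" "0 < a" "0 \<le> x" "x \<le> T" "0 < e" "e < 1"
  shows "(1 - e) * a * (1 - (x - a)\<^sup>2 / (e\<^sup>2 * a\<^sup>2)) \<le> min x (T - x)"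
proof (cases "(e * a)\<^sup>2 \<le> (x - a)\<^sup>2")
  case True
  moreover have "0 < e\<^sup>2 * a\<^sup>2" using assms by simp
  ultimately have "1 \<le> (x - a)\<^sup>2 / (e\<^sup>2 * a\<^sup>2)"
    by (simp add: le_divide_eq power_mult_distrib)
  moreover have "0 \<le> (1 - e) * a" using assms by simp
  ultimately have "(1 - e) * a * (1 - (x - a)\<^sup>2 / (e\<^sup>2 * a\<^sup>2)) \<le> 0"
    by (intro mult_nonneg_nonpos) auto
  then show ?thesis using assms by simp
next
  case False
  then have "\<bar>x - a\<bar>\<^sup>2 < (e * a)\<^sup>2" by simp
  moreover have "0 \<le> e * a" using assms by simp
  ultimately have "\<bar>x - a\<bar> < e * a" by (rule power_less_imp_less_base)
  then have "a - e * a < x" "x < a + e * a" by (simp_all add: abs_less_iff)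
  then have "(1 - e) * a \<le> min x (T - x)"
    using assms by (simp add: left_diff_distrib)
  moreover have "(1 - e) * a * (1 - (x - a)\<^sup>2 / (e\<^sup>2 * a\<^sup>2)) \<le> (1 - e) * a"
    using assms by (intro mult_left_le) auto
  ultimately show ?thesis by linarith
qed

(* Integrating the global parabola pays off when a and b are far apart; when b <= 2a the
   parabola localised at a (scaled by e) is used instead. *)
lemma expected_min_compl_ge_unbalanced:
  fixes p X :: "'s \<Rightarrow> real"
  assumes p_nonneg: "\<forall>i\<in>I. 0 \<le> p i" and mean: "(\<Sum>i\<in>I. p i * X i) = a"
    and variance: "(\<Sum>i\<in>I. p i * (X i - a)\<^sup>2) \<le> M * a * b / T"
    and total: "a + b = T" and a_pos: "0 < a" and M_nonneg: "0 \<le> M"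
    and unbalanced: "2 * a \<le> b"
  shows "(1 - 2 * M / T) * a \<le> (\<Sum>i\<in>I. p i * min (X i) (T - X i))"
proof -
  let ?V = "\<Sum>i\<in>I. p i * (X i - a)\<^sup>2"
  have T_pos: "0 < T" and ba_pos: "0 < b - a" using unbalanced total a_pos by auto
  have "?V / (b - a) \<le> M * a * b / T / (b - a)"
    using ba_pos by (intro divide_right_mono[OF variance]) simp
  also have "\<dots> \<le> 2 * M * a / T"
  proof -
    have "b / (b - a) \<le> 2" using unbalanced ba_pos by (simp add: divide_le_eq)
    then have "M * a / T * (b / (b - a)) \<le> M * a / T * 2"
      using M_nonneg a_pos T_pos by (intro mult_left_mono) auto
    then show ?thesis by (simp add: mult_ac)
  qed
  finally have "a - 2 * M * a / T \<le> a - ?V / (b - a)" by simp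
  also have "a - ?V / (b - a) = (\<Sum>i\<in>I. p i * (X i - (X i - a)\<^sup>2 / (b - a)))"
    using mean by (simp add: algebra_simps sum_subtractf sum_divide_distrib)
  also have "\<dots> \<le> (\<Sum>i\<in>I. p i * min (X i) (T - X i))"
    using p_nonneg total ba_pos
    by (intro sum_mono mult_left_mono min_compl_ge_parabola) auto
  finally show ?thesis by (simp add: algebra_simps)
qed

lemma expected_min_compl_ge_balanced:
  fixes p X :: "'s \<Rightarrow> real"
  assumes p_nonneg: "\<forall>i\<in>I. 0 \<le> p i" and p_sum: "sum p I = 1"
    and variance: "(\<Sum>i\<in>I. p i * (X i - a)\<^sup>2) \<le> M * a * b / T"
    and total: "a + b = T" and a_pos: "0 < a" and M_nonneg: "0 \<le> M"
    and balanced: "a \<le> b" "b \<le> 2 * a" and e: "0 < e" "e < 1"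
    and range: "\<forall>i\<in>I. 0 \<le> X i \<and> X i \<le> T"
  shows "(1 - 2 * M / (e\<^sup>2 * T)) * (1 - e) * a \<le> (\<Sum>i\<in>I. p i * min (X i) (T - X i))"
proof -
  let ?V = "\<Sum>i\<in>I. p i * (X i - a)\<^sup>2"
  have T_pos: "0 < T" using balanced total a_pos by auto
  have "?V / (e\<^sup>2 * a\<^sup>2) \<le> M * a * b / T / (e\<^sup>2 * a\<^sup>2)"
    by (intro divide_right_mono[OF variance]) simp
  also have "\<dots> \<le> 2 * M / (e\<^sup>2 * T)"
  proof -
    have "b / a \<le> 2" using balanced a_pos by (simp add: divide_le_eq)
    then have "M / (e\<^sup>2 * T) * (b / a) \<le> M / (e\<^sup>2 * T) * 2"
      using M_nonneg T_pos by (intro mult_left_mono) auto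
    then show ?thesis using a_pos by (simp add: power2_eq_square mult_ac)
  qed
  finally have "(1 - e) * a * (1 - 2 * M / (e\<^sup>2 * T)) \<le> (1 - e) * a * (1 - ?V / (e\<^sup>2 * a\<^sup>2))"
    using e a_pos by (intro mult_left_mono) auto
  also have "\<dots> = (1 - e) * a * sum p I - (1 - e) * a / (e\<^sup>2 * a\<^sup>2) * ?V"
    using p_sum by (simp add: right_diff_distrib)
  also have "\<dots> = (\<Sum>i\<in>I. (1 - e) * a * p i - (1 - e) * a / (e\<^sup>2 * a\<^sup>2) * (p i * (X i - a)\<^sup>2))"
    by (simp add: sum_subtractf sum_distrib_left)
  also have "\<dots> = (\<Sum>i\<in>I. p i * ((1 - e) * a * (1 - (X i - a)\<^sup>2 / (e\<^sup>2 * a\<^sup>2))))"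
    by (intro sum.cong refl) (simp add: algebra_simps diff_divide_distrib)
  also have "\<dots> \<le> (\<Sum>i\<in>I. p i * min (X i) (T - X i))"
    using p_nonneg total balanced a_pos e range
    by (intro sum_mono mult_left_mono min_compl_ge_local_parabola[of a b T]) auto
  finally show ?thesis by (simp add: mult_ac)
qed

lemma expected_min_compl_ge_of_le:
  fixes p X :: "'s \<Rightarrow> real"
  assumes p_nonneg: "\<forall>i\<in>I. 0 \<le> p i" and p_sum: "sum p I = 1"
    and range: "\<forall>i\<in>I. 0 \<le> X i \<and> X i \<le> T"
    and mean: "(\<Sum>i\<in>I. p i * X i) = a"
    and variance: "(\<Sum>i\<in>I. p i * (X i - a)\<^sup>2) \<le> M * a * b / T"
    and total: "a + b = T" and a_pos: "0 < a" and le: "a \<le> b" and M_nonneg: "0 \<le> M"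
    and e: "0 < e" "e < 1"
  shows "(1 - 2 * M / (e\<^sup>2 * T)) * (1 - e) * a \<le> (\<Sum>i\<in>I. p i * min (X i) (T - X i))"
proof -
  have T_pos: "0 < T" using total a_pos le by linarith
  consider "b \<le> 2 * a" | "2 * a \<le> b" "2 * M \<le> e\<^sup>2 * T" | "e\<^sup>2 * T < 2 * M" by linarith
  then show ?thesis
  proof cases
    case 1
    then show ?thesis
      using expected_min_compl_ge_balanced[OF p_nonneg p_sum variance total a_pos M_nonneg le _ e range]
      by simp
  next
    case 2
    have "e\<^sup>2 * T \<le> T" using e T_pos by (intro mult_left_le_one_le) (auto simp: power_le_one)
    then have gap: "2 * M / T \<le> 2 * M / (e\<^sup>2 * T)"
      using M_nonneg e T_pos by (intro divide_left_mono) auto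
    have "0 \<le> 1 - 2 * M / (e\<^sup>2 * T)"
      using 2 e T_pos by (simp add: divide_le_eq)
    then have "(1 - 2 * M / (e\<^sup>2 * T)) * (1 - e) \<le> 1 - 2 * M / (e\<^sup>2 * T)"
      using e by (intro mult_left_le) auto
    with gap have "(1 - 2 * M / (e\<^sup>2 * T)) * (1 - e) \<le> 1 - 2 * M / T" by linarith
    then have "(1 - 2 * M / (e\<^sup>2 * T)) * (1 - e) * a \<le> (1 - 2 * M / T) * a"
      using a_pos by (intro mult_right_mono) auto
    also have "\<dots> \<le> (\<Sum>i\<in>I. p i * min (X i) (T - X i))"
      using expected_min_compl_ge_unbalanced[OF p_nonneg mean variance total a_pos M_nonneg 2(1)] .
    finally show ?thesis .
  next
    case 3
    then have "1 < 2 * M / (e\<^sup>2 * T)" using e T_pos by (simp add: less_divide_eq)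
    then have "(1 - 2 * M / (e\<^sup>2 * T)) * (1 - e) * a \<le> 0"
      using e a_pos by (intro mult_nonpos_nonneg) auto
    also have "0 \<le> (\<Sum>i\<in>I. p i * min (X i) (T - X i))"
      using p_nonneg range by (intro sum_nonneg mult_nonneg_nonneg) auto
    finally show ?thesis .
  qed
qed

lemma expected_min_compl_ge:
  fixes p X :: "'s \<Rightarrow> real"
  assumes p_nonneg: "\<forall>i\<in>I. 0 \<le> p i" and p_sum: "sum p I = 1"
    and range: "\<forall>i\<in>I. 0 \<le> X i \<and> X i \<le> T"
    and mean: "(\<Sum>i\<in>I. p i * X i) = a"
    and variance: "(\<Sum>i\<in>I. p i * (X i - a)\<^sup>2) \<le> M * a * b / T"
    and total: "a + b = T" and pos: "0 < a" "0 < b" and M_nonneg: "0 \<le> M"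
    and e: "0 < e" "e < 1"
  shows "(1 - 2 * M / (e\<^sup>2 * T)) * (1 - e) * min a b \<le> (\<Sum>i\<in>I. p i * min (X i) (T - X i))"
proof (cases "a \<le> b")
  case True
  then show ?thesis
    using expected_min_compl_ge_of_le[OF p_nonneg p_sum range mean variance total pos(1) True M_nonneg e]
    by simp
next
  case False
  have mean': "(\<Sum>i\<in>I. p i * (T - X i)) = b"
    using p_sum mean total by (simp add: right_diff_distrib sum_subtractf sum_distrib_right[symmetric])
  have "T - X i - b = a - X i" for i using total by simp
  then have "(T - X i - b)\<^sup>2 = (X i - a)\<^sup>2" for i by (metis power2_commute)
  then have variance': "(\<Sum>i\<in>I. p i * (T - X i - b)\<^sup>2) \<le> M * b * a / T"
    using variance by (simp add: mult_ac)
  have range': "\<forall>i\<in>I. 0 \<le> T - X i \<and> T - X i \<le> T" using range by auto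
  have "b + a = T" "b \<le> a" using total False by auto
  from expected_min_compl_ge_of_le[OF p_nonneg p_sum range' mean' variance' this(1) pos(2) this(2)
      M_nonneg e]
  have "(1 - 2 * M / (e\<^sup>2 * T)) * (1 - e) * b
      \<le> (\<Sum>i\<in>I. p i * min (T - X i) (T - (T - X i)))" .
  then show ?thesis using False by (simp add: min.commute)
qed

section \<open>Volumes and the Cheeger constant of a connected graph\<close>

lemma singleton_psubset_vertices:
  fixes n :: nat
  assumes "2 \<le> n" "u < n"
  shows "{u} \<subset> {0..<n}"
proof -
  have "card {u} \<noteq> card {0..<n}" using assms(1) by simp
  then have "{u} \<noteq> {0..<n}" by metis
  then show ?thesis using assms(2) by auto
qed

lemma vol_pos:
  assumes "2 \<le> n" "weighted_graph n w" "loopless n w" "connected_wg n w" "u < n"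
  shows "0 < vol n w u"
proof -
  have "{u} \<subset> {0..<n}" using assms(1,5) by (rule singleton_psubset_vertices)
  then have "0 < cut n w {u}" using assms(4) unfolding connected_wg_def by blast
  also have "cut n w {u} = w u u + (\<Sum>v\<in>{0..<n} - {u}. w u v)"
    using assms(3,5) by (simp add: cut_def loopless_def)
  also have "\<dots> = (\<Sum>v\<in>{0..<n}. w u v)"
    using assms(5) by (simp add: sum.remove)
  also have "\<dots> = vol n w u"
    using assms(2,5) unfolding vol_def weighted_graph_def by (intro sum.cong) auto
  finally show ?thesis .
qed

lemma vol_set_pos:
  assumes "2 \<le> n" "weighted_graph n w" "loopless n w" "connected_wg n w"
    and "S \<noteq> {}" "S \<subseteq> {0..<n}"
  shows "0 < vol_set n w S"
  unfolding vol_set_def using assms vol_pos[OF assms(1-4)]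
  by (intro sum_pos) (auto intro: finite_subset)

lemma cheeger_le_ratio:
  assumes "S \<noteq> {}" "S \<subset> {0..<n}"
  shows "cheeger n w \<le> cut n w S / min (vol_set n w S) (vol_set n w ({0..<n} - S))"
  unfolding cheeger_def
proof (rule cINF_lower)
  have "finite {S. S \<noteq> {} \<and> S \<subset> {0..<n}}"
    by (rule finite_subset[of _ "Pow {0..<n}"]) auto
  then show "bdd_below ((\<lambda>S. cut n w S / min (vol_set n w S) (vol_set n w ({0..<n} - S)))
      ` {S. S \<noteq> {} \<and> S \<subset> {0..<n}})"
    by (intro bdd_below_finite finite_imageI)
qed (use assms in simp)

lemma cheeger_pos:
  assumes "2 \<le> n" "weighted_graph n w" "loopless n w" "connected_wg n w"
  shows "0 < cheeger n w"
proof -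
  let ?F = "{S. S \<noteq> {} \<and> S \<subset> {0..<n}}"
  let ?ratio = "\<lambda>S. cut n w S / min (vol_set n w S) (vol_set n w ({0..<n} - S))"
  have "finite ?F" by (rule finite_subset[of _ "Pow {0..<n}"]) auto
  moreover have "{0} \<in> ?F" using singleton_psubset_vertices[OF assms(1)] assms(1) by simp
  ultimately have fin: "finite (?ratio ` ?F)" and ne: "?ratio ` ?F \<noteq> {}" by blast+
  have "cheeger n w = Min (?ratio ` ?F)"
    unfolding cheeger_def using fin ne by (rule cInf_eq_Min)
  then obtain S where "S \<in> ?F" and cheeger_eq: "cheeger n w = ?ratio S"
    using Min_in[OF fin ne] by auto
  then have S: "S \<noteq> {}" "S \<subseteq> {0..<n}" "{0..<n} - S \<noteq> {}" "S \<subset> {0..<n}" by auto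
  then have "0 < cut n w S" using assms(4) unfolding connected_wg_def by blast
  moreover have "0 < vol_set n w S" "0 < vol_set n w ({0..<n} - S)"
    using S vol_set_pos[OF assms] by auto
  ultimately show ?thesis unfolding cheeger_eq by simp
qed

lemma cheeger_mult_min_le_cut:
  assumes "2 \<le> n" "weighted_graph n w" "loopless n w" "connected_wg n w" "S \<subseteq> {0..<n}"
  shows "cheeger n w * min (vol_set n w S) (vol_set n w ({0..<n} - S)) \<le> cut n w S"
proof (cases "S = {} \<or> S = {0..<n}")
  case True
  have "0 \<le> vol_set n w {0..<n}"
    using vol_pos[OF assms(1-4)] unfolding vol_set_def by (intro sum_nonneg) (simp add: less_imp_le)
  moreover have "vol_set n w {} = 0" "cut n w {} = 0" "cut n w {0..<n} = 0"
    by (simp_all add: vol_set_def cut_def)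
  ultimately show ?thesis using True by (auto simp: min_def)
next
  case False
  then have "S \<noteq> {}" "{0..<n} - S \<noteq> {}" using assms(5) by auto
  then have "0 < min (vol_set n w S) (vol_set n w ({0..<n} - S))"
    using assms(5) vol_set_pos[OF assms(1-4)] by simp
  moreover have "cheeger n w \<le> cut n w S / min (vol_set n w S) (vol_set n w ({0..<n} - S))"
    using False assms(5) by (intro cheeger_le_ratio) auto
  ultimately show ?thesis by (simp add: pos_le_divide_eq)
qed

section \<open>Fractional partitions\<close>

(* Jensen's inequality for t |-> t (1 - t) with weights d, denominators cleared: twice the
   difference of the two sides is sum_u sum_v d u * d v * (rho u - rho v)^2. *)
lemma sum_mult_sum_rho_eta_le:
  fixes d \<rho> \<eta> :: "'a \<Rightarrow> real"
  assumes "\<forall>u\<in>A. 0 \<le> d u" "\<forall>u\<in>A. \<rho> u + \<eta> u = 1"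
  shows "(\<Sum>u\<in>A. d u) * (\<Sum>u\<in>A. \<rho> u * \<eta> u * d u)
     \<le> (\<Sum>u\<in>A. \<rho> u * d u) * (\<Sum>u\<in>A. \<eta> u * d u)"
proof -
  define D where "D u v = d u * d v * (\<eta> v * (\<rho> u - \<rho> v))" for u v
  have "(\<Sum>u\<in>A. \<rho> u * d u) * (\<Sum>u\<in>A. \<eta> u * d u) - (\<Sum>u\<in>A. d u) * (\<Sum>u\<in>A. \<rho> u * \<eta> u * d u)
      = (\<Sum>u\<in>A. \<Sum>v\<in>A. \<rho> u * d u * (\<eta> v * d v) - d u * (\<rho> v * \<eta> v * d v))"
    by (simp add: sum_product sum_subtractf)
  also have "\<dots> = (\<Sum>u\<in>A. \<Sum>v\<in>A. D u v)"
    unfolding D_def by (intro sum.cong refl) (simp add: algebra_simps)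
  also have "\<dots> = (\<Sum>u\<in>A. \<Sum>v\<in>A. D u v + D v u) / 2"
    using sum.swap[of "\<lambda>u v. D v u" A A] by (simp add: sum.distrib)
  also have "\<dots> = (\<Sum>u\<in>A. \<Sum>v\<in>A. d u * d v * (\<rho> u - \<rho> v)\<^sup>2) / 2"
  proof (intro arg_cong[where f = "\<lambda>x. x / 2"] sum.cong refl)
    fix u v assume "u \<in> A" "v \<in> A"
    then have \<eta>u: "\<eta> u = 1 - \<rho> u" and \<eta>v: "\<eta> v = 1 - \<rho> v"
      using assms(2) by (simp_all add: eq_diff_eq add.commute)
    show "D u v + D v u = d u * d v * (\<rho> u - \<rho> v)\<^sup>2"
      unfolding D_def \<eta>u \<eta>v by (simp add: power2_eq_square algebra_simps)
  qed
  also have "\<dots> \<ge> 0" using assms(1) by (intro divide_nonneg_pos sum_nonneg mult_nonneg_nonneg) auto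
  finally show ?thesis by simp
qed

lemma max_div_sum_le:
  fixes f :: "'a \<Rightarrow> real"
  assumes "finite A" "A \<noteq> {}" "\<forall>i\<in>A. 0 < f i"
  shows "(MAX i\<in>A. f i) / (\<Sum>i\<in>A. f i) \<le> (MAX i\<in>A. f i) / (MIN i\<in>A. f i) / card A"
proof -
  obtain i where i: "i \<in> A" using assms(2) by blast
  have "f i \<le> (MAX i\<in>A. f i)" using assms(1) i by simp
  then have "0 \<le> (MAX i\<in>A. f i)" using assms(3) i by (meson less_imp_le order_trans)
  moreover have "0 < card A * (MIN i\<in>A. f i)" using assms by (simp add: card_gt_0_iff)
  moreover have "card A * (MIN i\<in>A. f i) \<le> (\<Sum>i\<in>A. f i)"
    using assms sum_mono[of A "\<lambda>_. MIN i\<in>A. f i" f] by simp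
  ultimately have "(MAX i\<in>A. f i) / (\<Sum>i\<in>A. f i) \<le> (MAX i\<in>A. f i) / (card A * (MIN i\<in>A. f i))"
    by (intro divide_left_mono) auto
  then show ?thesis by (simp add: divide_divide_eq_left mult.commute)
qed

lemma max_vol_pos:
  assumes "2 \<le> n" "weighted_graph n w" "loopless n w" "connected_wg n w"
  shows "0 < (MAX i\<in>{0..<n}. vol n w i)"
proof -
  have "vol n w 0 \<le> (MAX i\<in>{0..<n}. vol n w i)" using assms(1) by simp
  moreover have "0 < vol n w 0" using vol_pos[OF assms] assms(1) by simp
  ultimately show ?thesis by linarith
qed

lemma vol_set_variance_le:
  assumes "2 \<le> n" "weighted_graph n w" "loopless n w" "connected_wg n w"
    and "fractional_partition n \<rho> \<eta>"
  shows "(\<Sum>S\<in>Pow {0..<n}. bernoulli_weight {0..<n} \<rho> \<eta> S * (vol_set n w S - frac_norm n w \<rho>)\<^sup>2)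
    \<le> (MAX i\<in>{0..<n}. vol n w i) * frac_norm n w \<rho> * frac_norm n w \<eta> / (\<Sum>i\<in>{0..<n}. vol n w i)"
proof -
  let ?V = "{0..<n}" and ?M = "MAX i\<in>{0..<n}. vol n w i" and ?T = "\<Sum>i\<in>{0..<n}. vol n w i"
  have partition: "\<forall>u\<in>?V. \<rho> u + \<eta> u = 1" and nonneg: "\<forall>u\<in>?V. 0 \<le> \<rho> u \<and> 0 \<le> \<eta> u"
    using assms(5) by (auto simp: fractional_partition_def)
  have vol_pos: "\<forall>u\<in>?V. 0 < vol n w u" using vol_pos[OF assms(1-4)] by simp
  then have T_pos: "0 < ?T" using assms(1) by (intro sum_pos) auto
  have "(\<Sum>S\<in>Pow ?V. bernoulli_weight ?V \<rho> \<eta> S * (vol_set n w S - frac_norm n w \<rho>)\<^sup>2)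
      = (\<Sum>u\<in>?V. \<rho> u * \<eta> u * (vol n w u)\<^sup>2)"
    unfolding vol_set_def frac_norm_def by (rule bernoulli_variance) (use partition in simp_all)
  also have "\<dots> \<le> (\<Sum>u\<in>?V. ?M * (\<rho> u * \<eta> u * vol n w u))"
  proof (rule sum_mono)
    fix u assume u: "u \<in> ?V"
    then have "vol n w u \<le> ?M" "0 \<le> \<rho> u * \<eta> u * vol n w u"
      using nonneg vol_pos by (auto simp: less_imp_le)
    from mult_right_mono[OF this]
    show "\<rho> u * \<eta> u * (vol n w u)\<^sup>2 \<le> ?M * (\<rho> u * \<eta> u * vol n w u)"
      by (simp add: power2_eq_square mult_ac)
  qed
  also have "\<dots> = ?M * (\<Sum>u\<in>?V. \<rho> u * \<eta> u * vol n w u)" by (simp add: sum_distrib_left)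
  also have "\<dots> \<le> ?M * (frac_norm n w \<rho> * frac_norm n w \<eta> / ?T)"
  proof (rule mult_left_mono)
    show "(\<Sum>u\<in>?V. \<rho> u * \<eta> u * vol n w u) \<le> frac_norm n w \<rho> * frac_norm n w \<eta> / ?T"
      using sum_mult_sum_rho_eta_le[of ?V "vol n w" \<rho> \<eta>] partition vol_pos T_pos
      unfolding frac_norm_def by (simp add: le_divide_eq less_imp_le mult.commute)
    show "0 \<le> ?M" using max_vol_pos[OF assms(1-4)] by simp
  qed
  finally show ?thesis by simp
qed

lemma frac_cheeger_ratio_ge:
  assumes "2 \<le> n" "weighted_graph n w" "loopless n w" "connected_wg n w"
    and "fractional_partition n \<rho> \<eta>" "frac_norm n w \<rho> \<noteq> 0" "frac_norm n w \<eta> \<noteq> 0"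
    and "0 < e" "e < 1"
  shows "(1 - 2 * (MAX i\<in>{0..<n}. vol n w i) / (e\<^sup>2 * (\<Sum>i\<in>{0..<n}. vol n w i))) * (1 - e)
      * cheeger n w \<le> frac_cheeger_ratio n w \<rho> \<eta>"
proof -
  define V where "V = {0..<n}"
  define M where "M = (MAX i\<in>V. vol n w i)"
  define T where "T = (\<Sum>i\<in>V. vol n w i)"
  define a where "a = frac_norm n w \<rho>"
  define b where "b = frac_norm n w \<eta>"
  define c where "c = (1 - 2 * M / (e\<^sup>2 * T)) * (1 - e)"
  define P where "P = bernoulli_weight V \<rho> \<eta>"
  define X where "X = vol_set n w"
  have finite: "finite V" by (simp add: V_def)
  have partition: "\<forall>u\<in>V. \<rho> u + \<eta> u = 1" and nonneg: "\<forall>u\<in>V. 0 \<le> \<rho> u \<and> 0 \<le> \<eta> u"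
    using assms(5) by (auto simp: fractional_partition_def V_def)
  have vol_pos: "\<forall>u\<in>V. 0 < vol n w u" using vol_pos[OF assms(1-4)] by (simp add: V_def)
  have "0 \<le> a" "0 \<le> b"
    unfolding a_def b_def frac_norm_def using nonneg vol_pos
    by (auto intro!: sum_nonneg simp: V_def less_imp_le)
  then have a_pos: "0 < a" and b_pos: "0 < b" using assms(6,7) by (auto simp: a_def b_def)
  have total: "a + b = T"
    unfolding a_def b_def T_def frac_norm_def V_def using partition
    by (simp add: V_def sum.distrib[symmetric] distrib_right[symmetric])
  have M_nonneg: "0 \<le> M" unfolding M_def V_def
    using max_vol_pos[OF assms(1-4)] by simp
  have P_nonneg: "\<forall>S\<in>Pow V. 0 \<le> P S"
    unfolding P_def using nonneg by (auto intro: bernoulli_weight_nonneg)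
  have X_range: "\<forall>S\<in>Pow V. 0 \<le> X S \<and> X S \<le> T"
    unfolding X_def T_def vol_set_def using finite vol_pos
    by (auto intro!: sum_nonneg sum_mono2 simp: less_imp_le)
  have expected_min: "c * min a b \<le> (\<Sum>S\<in>Pow V. P S * min (X S) (T - X S))"
    unfolding c_def
  proof (rule expected_min_compl_ge)
    show "\<forall>S\<in>Pow V. 0 \<le> P S" by (rule P_nonneg)
    show "sum P (Pow V) = 1" unfolding P_def using finite partition by (rule sum_bernoulli_weight)
    show "(\<Sum>S\<in>Pow V. P S * X S) = a"
      unfolding P_def X_def a_def vol_set_def frac_norm_def V_def
      by (rule bernoulli_expectation) (use partition V_def in simp_all)
    show "(\<Sum>S\<in>Pow V. P S * (X S - a)\<^sup>2) \<le> M * a * b / T"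
      unfolding P_def X_def a_def b_def M_def T_def V_def using vol_set_variance_le[OF assms(1-5)]
      by simp
  qed (use X_range total a_pos b_pos M_nonneg assms(8,9) in simp_all)
  have expected_cut: "cheeger n w * (\<Sum>S\<in>Pow V. P S * min (X S) (T - X S))
      \<le> (\<Sum>S\<in>Pow V. P S * cut n w S)"
  proof -
    have "cheeger n w * min (X S) (T - X S) \<le> cut n w S" if "S \<subseteq> V" for S
    proof -
      have "vol_set n w (V - S) = T - X S"
        unfolding X_def T_def vol_set_def using finite that by (simp add: sum_diff)
      moreover have "cheeger n w * min (X S) (vol_set n w (V - S)) \<le> cut n w S"
        using cheeger_mult_min_le_cut[OF assms(1-4), of S] that by (simp add: V_def X_def)
      ultimately show ?thesis by simp
    qed
    with P_nonneg have "(\<Sum>S\<in>Pow V. P S * (cheeger n w * min (X S) (T - X S)))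
        \<le> (\<Sum>S\<in>Pow V. P S * cut n w S)"
      by (intro sum_mono mult_left_mono) auto
    then show ?thesis by (simp add: sum_distrib_left mult.left_commute)
  qed
  have "(\<Sum>S\<in>Pow V. P S * cut n w S) = (\<Sum>u\<in>V. \<Sum>v\<in>V. \<rho> u * \<eta> v * w u v)"
    unfolding P_def cut_def V_def
    by (rule bernoulli_expectation_cut) (use partition assms(3) V_def in \<open>simp_all add: loopless_def\<close>)
  moreover have "cheeger n w * (c * min a b)
      \<le> cheeger n w * (\<Sum>S\<in>Pow V. P S * min (X S) (T - X S))"
    using expected_min cheeger_pos[OF assms(1-4)] by (simp add: mult_left_mono)
  ultimately have "cheeger n w * (c * min a b) \<le> (\<Sum>u\<in>V. \<Sum>v\<in>V. \<rho> u * \<eta> v * w u v)"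
    using expected_cut by simp
  then show ?thesis
    using a_pos b_pos unfolding frac_cheeger_ratio_def
    by (simp add: c_def M_def T_def V_def a_def b_def le_divide_eq mult_ac)
qed

theorem mainTheorem12:
  fixes n :: nat and w :: "nat \<Rightarrow> nat \<Rightarrow> real" and \<epsilon> :: real
  assumes "n \<ge> 2"
    and "weighted_graph n w" and "loopless n w" and "connected_wg n w"
    and "0 < \<epsilon>" and "\<epsilon> < 1"
  defines "\<gamma> \<equiv> (MAX i \<in> {0..<n}. vol n w i) / (MIN i \<in> {0..<n}. vol n w i)"
  shows "frac_cheeger n w / cheeger n w \<ge> (1 - 2 * \<gamma> / (\<epsilon>\<^sup>2 * real n)) * (1 - \<epsilon>)"
proof -
  let ?M = "MAX i\<in>{0..<n}. vol n w i" and ?T = "\<Sum>i\<in>{0..<n}. vol n w i"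
  let ?c = "(1 - 2 * ?M / (\<epsilon>\<^sup>2 * ?T)) * (1 - \<epsilon>)"
  let ?\<rho> = "\<lambda>u. of_bool (u = 0) :: real" and ?\<eta> = "\<lambda>u. of_bool (u \<noteq> 0) :: real"
  have "frac_norm n w ?\<rho> = vol n w 0"
    using assms(1) by (simp add: frac_norm_def sum.If_cases)
  moreover have "0 < frac_norm n w ?\<eta>"
    unfolding frac_norm_def using assms(1) vol_pos[OF assms(1-4)]
    by (auto intro!: sum_pos2[of _ 1] simp: less_imp_le)
  ultimately have "(?\<rho>, ?\<eta>) \<in> {(\<rho>, \<eta>). fractional_partition n \<rho> \<eta>
      \<and> frac_norm n w \<rho> \<noteq> 0 \<and> frac_norm n w \<eta> \<noteq> 0}"
    using vol_pos[OF assms(1-4), of 0] assms(1) by (auto simp: fractional_partition_def)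
  then have "?c * cheeger n w \<le> frac_cheeger n w"
    unfolding frac_cheeger_def
    by (intro cINF_greatest) (use frac_cheeger_ratio_ge[OF assms(1-4) _ _ _ assms(5,6)] in auto)
  then have "?c \<le> frac_cheeger n w / cheeger n w"
    using cheeger_pos[OF assms(1-4)] by (simp add: le_divide_eq)
  moreover have "?M / ?T \<le> \<gamma> / n"
    unfolding \<gamma>_def using max_div_sum_le[of "{0..<n}" "vol n w"] vol_pos[OF assms(1-4)] assms(1)
    by simp
  then have "2 / \<epsilon>\<^sup>2 * (?M / ?T) \<le> 2 / \<epsilon>\<^sup>2 * (\<gamma> / n)"
    by (rule mult_left_mono) simp
  then have "2 * ?M / (\<epsilon>\<^sup>2 * ?T) \<le> 2 * \<gamma> / (\<epsilon>\<^sup>2 * n)" by simp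
  then have "(1 - 2 * \<gamma> / (\<epsilon>\<^sup>2 * n)) * (1 - \<epsilon>) \<le> ?c"
    using assms(6) by (intro mult_right_mono) auto
  ultimately show ?thesis by linarith
qed

end
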